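(* Let $p=p_1p_2\cdots p_n$ be a permutation avoiding the pattern $1324$, and let $w(p)$ and $z(p)$ be the two words of length $n$ over $\{A,B,C,D\}$ defined in the context. Then for every $i\geq 1$: if the $i$th letter $A$ from the right in $w(p)$ is in the middle of a $CAB$-factor (i.e., it is immediately preceded by a letter $C$ and immediately followed by a letter $B$), then the $i$th segment of $z(p)$ from the left contains a letter $B$.
   Context: A permutation $p$ avoids $1324$ if there are no indices $i_1<i_2<i_3<i_4$ with $p_{i_1}<p_{i_3}<p_{i_2}<p_{i_4}$. An entry $p_i$ is a left-to-right minimum if it is smaller than all entries to its left, and a right-to-left maximum if it is larger than all entries to its right (these notions are also applied to subsequences). Coloring: scan $p$ from left to right; color $p_i$ blue if coloring it red would create a $132$-pattern consisting entirely of red entries (among the previously colored red entries together with $p_i$); otherwise color $p_i$ red. Then mark each entry with a letter: (1) a red entry that is a left-to-right minimum of the subsequence of red entries gets $A$; (2) a red entry that is not such a left-to-right minimum gets $B$; (3) a blue entry that is not a right-to-left maximum of the subsequence of blue entries gets $C$; (4) a blue entry that is a right-to-left maximum of the subsequence of blue entries gets $D$; (4') finally, every entry that is a right-to-left maximum of all of $p$ but not a left-to-right minimum of $p$ is colored blue and marked $D$, regardless of the earlier rules. The word $w(p)$ has as its $i$th letter the letter of $p_i$; the word $z(p)$ has as its $i$th letter the letter of the entry of value $i$. A segment of a word $v$ over $\{A,B,C,D\}$ is a factor (consecutive letters) that starts with a letter $A$ and ends immediately before the next letter $A$, or at the end of $v$. The $i$th segment from the left is the one starting at the $i$th letter $A$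 from the left. *)

theory Defs
  imports Main
begin

text \<open>Permutations of length n are lists containing each of 1..n exactly once.
  Positions are 0-based list indices; values are 1..n.\<close>

definition is_perm :: "nat list \<Rightarrow> bool" where
  "is_perm p \<longleftrightarrow> distinct p \<and> set p = {1..length p}"

definition avoids1324 :: "nat list \<Rightarrow> bool" where
  "avoids1324 p \<longleftrightarrow> \<not> (\<exists>i1 i2 i3 i4. i1 < i2 \<and> i2 < i3 \<and> i3 < i4 \<and> i4 < length p \<and>
      p ! i1 < p ! i3 \<and> p ! i3 < p ! i2 \<and> p ! i2 < p ! i4)"

definition has132 :: "nat list \<Rightarrow> bool" where
  "has132 ys \<longleftrightarrow> (\<exists>i j k. i < j \<and> j < k \<and> k < length ys \<and>
      ys ! i < ys ! k \<and> ys ! k < ys ! j)"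

text \<open>Coloring scan: R is the list of values already colored red (in order).
  True = red, False = blue.\<close>
fun color_scan :: "nat list \<Rightarrow> nat list \<Rightarrow> bool list" where
  "color_scan R [] = []"
| "color_scan R (x # xs) =
     (if has132 (R @ [x]) then False # color_scan R xs
      else True # color_scan (R @ [x]) xs)"

definition is_red :: "nat list \<Rightarrow> nat \<Rightarrow> bool" where
  "is_red p i = (color_scan [] p ! i)"

datatype letter = A | B | C | D

definition letter_at :: "nat list \<Rightarrow> nat \<Rightarrow> letter" where
  "letter_at p i =
     (if (\<forall>j. i < j \<and> j < length p \<longrightarrow> p ! j < p ! i)
          \<and> (\<exists>j<i. p ! j < p ! i) then D
      else if is_red p i then
        (if (\<forall>j<i. is_red p j \<longrightarrow> p ! i < p ! j) then A else B)
      else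
        (if (\<forall>j. i < j \<and> j < length p \<and> \<not> is_red p j \<longrightarrow> p ! j < p ! i) then D else C))"

definition wword :: "nat list \<Rightarrow> letter list" where
  "wword p = map (letter_at p) [0..<length p]"

definition zword :: "nat list \<Rightarrow> letter list" where
  "zword p = map (\<lambda>v. letter_at p (THE j. j < length p \<and> p ! j = v)) [1..<length p + 1]"

definition A_positions :: "letter list \<Rightarrow> nat list" where
  "A_positions v = filter (\<lambda>j. v ! j = A) [0..<length v]"

definition ith_A_from_right_in_CAB :: "letter list \<Rightarrow> nat \<Rightarrow> bool" where
  "ith_A_from_right_in_CAB v i \<longleftrightarrow>
     1 \<le> i \<and> i \<le> length (A_positions v) \<and>
     (let j = rev (A_positions v) ! (i - 1) in
        0 < j \<and> j + 1 < length v \<and> v ! (j - 1) = C \<and> v ! (j + 1) = B)"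

definition ith_segment_contains_B :: "letter list \<Rightarrow> nat \<Rightarrow> bool" where
  "ith_segment_contains_B v i \<longleftrightarrow>
     1 \<le> i \<and> i \<le> length (A_positions v) \<and>
     (let s = A_positions v ! (i - 1);
          e = (if i < length (A_positions v) then A_positions v ! i else length v)
      in \<exists>k. s \<le> k \<and> k < e \<and> v ! k = B)"

end

theory Submission
  imports Defs
begin

text \<open>Let the A at position j of w(p) sit in a CAB factor. Since p(j-1) is blue, there are
  red entries a < b before it with p(a) < p(j-1) < p(b); avoiding 1324 forces p(j+1) < p(b),
  and p(j+1) being red forces p(j+1) < p(a) < p(j-1). As p(j-1) is not a right-to-left maximum
  of the blue entries, a larger blue entry p(m) follows, so another 1324 pattern would arise
  unless every A left of j has a value above p(j+1). On the other hand p(j+1) is a red entry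
  that is not a left-to-right minimum, hence p(j+1) > p(j). The A's of w(p) have decreasing
  values, so in z(p) they appear in reverse order, and the B of value p(j+1) lies between the
  A of value p(j) and the next A.\<close>

fun red_after :: "nat list \<Rightarrow> nat list \<Rightarrow> nat list" where
  "red_after R [] = R"
| "red_after R (x # xs) = (if has132 (R @ [x]) then red_after R xs else red_after (R @ [x]) xs)"

lemma length_color_scan: "length (color_scan R xs) = length xs"
  by (induction xs arbitrary: R) auto

lemma color_scan_append:
  "color_scan R (xs @ ys) = color_scan R xs @ color_scan (red_after R xs) ys"
  by (induction xs arbitrary: R) auto

lemma red_after_append: "red_after R (xs @ ys) = red_after (red_after R xs) ys"
  by (induction xs arbitrary: R) auto

lemma is_red_iff_not_has132:
  assumes "i < length p"
  shows "is_red p i \<longleftrightarrow> \<not> has132 (red_after [] (take i p) @ [p ! i])"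
proof -
  have "color_scan [] p = color_scan [] (take i p) @ color_scan (red_after [] (take i p)) (drop i p)"
    using color_scan_append[of "[]" "take i p" "drop i p"] by simp
  moreover have "drop i p = p ! i # drop (Suc i) p"
    using assms by (simp add: Cons_nth_drop_Suc)
  ultimately show ?thesis
    unfolding is_red_def using assms by (simp add: nth_append length_color_scan)
qed

lemma red_after_take:
  "i \<le> length p \<Longrightarrow>
     red_after [] (take i p) = map (nth p) (filter (is_red p) [0..<i])
     \<and> \<not> has132 (red_after [] (take i p))"
proof (induction i)
  case 0
  then show ?case by (simp add: has132_def)
next
  case (Suc i)
  then have "i < length p" by simp
  then have "take (Suc i) p = take i p @ [p ! i]"
    and "is_red p i \<longleftrightarrow> \<not> has132 (red_after [] (take i p) @ [p ! i])"
    by (simp_all add: take_Suc_conv_app_nth is_red_iff_not_has132)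
  moreover from Suc have
    "red_after [] (take i p) = map (nth p) (filter (is_red p) [0..<i])"
    "\<not> has132 (red_after [] (take i p))"
    by (meson Suc_leD)+
  ultimately show ?case
    by (cases "has132 (red_after [] (take i p) @ [p ! i])") (simp_all add: red_after_append)
qed

lemma has132_snoc_iff:
  fixes ks :: "'a::linorder list"
  assumes "sorted_wrt (<) ks"
  shows "has132 (map f ks @ [x]) \<longleftrightarrow>
     has132 (map f ks) \<or> (\<exists>a\<in>set ks. \<exists>b\<in>set ks. a < b \<and> f a < x \<and> x < f b)"
proof
  assume "has132 (map f ks @ [x])"
  then obtain i j k where ijk: "i < j" "j < k" "k < length ks + 1"
    "(map f ks @ [x]) ! i < (map f ks @ [x]) ! k" "(map f ks @ [x]) ! k < (map f ks @ [x]) ! j"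
    unfolding has132_def by auto
  show "has132 (map f ks) \<or> (\<exists>a\<in>set ks. \<exists>b\<in>set ks. a < b \<and> f a < x \<and> x < f b)"
  proof (cases "k < length ks")
    case True
    then have "has132 (map f ks)"
      using ijk unfolding has132_def
      by (rule_tac x=i in exI, rule_tac x=j in exI, rule_tac x=k in exI) (auto simp: nth_append)
    then show ?thesis ..
  next
    case False
    with ijk have "k = length ks" by simp
    with ijk assms have "ks ! i < ks ! j" "f (ks ! i) < x" "x < f (ks ! j)"
      by (simp_all add: sorted_wrt_nth_less nth_append)
    moreover have "ks ! i \<in> set ks" "ks ! j \<in> set ks"
      using ijk \<open>k = length ks\<close> by simp_all
    ultimately show ?thesis by blast
  qed
next
  assume "has132 (map f ks) \<or> (\<exists>a\<in>set ks. \<exists>b\<in>set ks. a < b \<and> f a < x \<and> x < f b)"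
  then show "has132 (map f ks @ [x])"
  proof
    assume "has132 (map f ks)"
    then obtain i j k where "i < j" "j < k" "k < length ks"
      "map f ks ! i < map f ks ! k" "map f ks ! k < map f ks ! j"
      unfolding has132_def by auto
    then show ?thesis
      unfolding has132_def
      by (rule_tac x=i in exI, rule_tac x=j in exI, rule_tac x=k in exI) (auto simp: nth_append)
  next
    assume "\<exists>a\<in>set ks. \<exists>b\<in>set ks. a < b \<and> f a < x \<and> x < f b"
    then obtain i j where ij: "i < length ks" "j < length ks" "ks ! i < ks ! j"
      "f (ks ! i) < x" "x < f (ks ! j)"
      by (auto simp: in_set_conv_nth)
    have "i < j"
    proof (rule ccontr)
      assume "\<not> i < j"
      then have "ks ! j \<le> ks ! i"
        using ij sorted_wrt_nth_less[OF assms, of j i] by (cases "i = j") auto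
      with ij show False by simp
    qed
    then show ?thesis
      unfolding has132_def using ij
      by (rule_tac x=i in exI, rule_tac x=j in exI, rule_tac x="length ks" in exI) (auto simp: nth_append)
  qed
qed

lemma is_red_iff:
  assumes "c < length p"
  shows "is_red p c \<longleftrightarrow>
    \<not> (\<exists>a b. a < b \<and> b < c \<and> is_red p a \<and> is_red p b \<and> p ! a < p ! c \<and> p ! c < p ! b)"
proof -
  let ?ks = "filter (is_red p) [0..<c]"
  have red: "red_after [] (take c p) = map (nth p) ?ks" "\<not> has132 (red_after [] (take c p))"
    using red_after_take[of c p] assms by auto
  have "is_red p c \<longleftrightarrow> \<not> has132 (map (nth p) ?ks @ [p ! c])"
    using is_red_iff_not_has132[OF assms] red by simp
  also have "\<dots> \<longleftrightarrow> \<not> (\<exists>a\<in>set ?ks. \<exists>b\<in>set ?ks. a < b \<and> p ! a < p ! c \<and> p ! c < p ! b)"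
    using has132_snoc_iff[of ?ks "nth p" "p ! c"] red by (simp add: sorted_wrt_filter)
  finally show ?thesis by auto
qed

lemma letter_at_A_imp: "letter_at p x = A \<Longrightarrow> is_red p x \<and> (\<forall>y<x. is_red p y \<longrightarrow> p ! x < p ! y)"
  unfolding letter_at_def by (auto split: if_splits)

lemma letter_at_B_imp: "letter_at p x = B \<Longrightarrow> is_red p x \<and> (\<exists>y<x. is_red p y \<and> p ! y \<le> p ! x)"
  unfolding letter_at_def by (auto split: if_splits)

lemma letter_at_C_imp:
  "letter_at p x = C \<Longrightarrow>
     \<not> is_red p x \<and> (\<exists>m. x < m \<and> m < length p \<and> \<not> is_red p m \<and> p ! x \<le> p ! m)"
  unfolding letter_at_def by (auto split: if_splits simp: not_less)

lemma avoids1324_nth: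
  assumes "avoids1324 p" "i1 < i2" "i2 < i3" "i3 < i4" "i4 < length p"
  shows "\<not> (p ! i1 < p ! i3 \<and> p ! i3 < p ! i2 \<and> p ! i2 < p ! i4)"
  using assms unfolding avoids1324_def by blast

lemma is_perm_nth_inj:
  "is_perm p \<Longrightarrow> x < length p \<Longrightarrow> y < length p \<Longrightarrow> p ! x = p ! y \<longleftrightarrow> x = y"
  by (simp add: is_perm_def nth_eq_iff_index_eq)

lemma is_perm_nth_bounds:
  "is_perm p \<Longrightarrow> k < length p \<Longrightarrow> 1 \<le> p ! k \<and> p ! k \<le> length p"
  using nth_mem[of k p] by (auto simp: is_perm_def)

lemma A_B_value_less:
  assumes "letter_at p j = A" "letter_at p (j + 1) = B" "is_perm p" "j + 1 < length p"
  shows "p ! j < p ! (j + 1)"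
proof -
  obtain y where y: "y < j + 1" "is_red p y" "p ! y \<le> p ! (j + 1)"
    using letter_at_B_imp[OF assms(2)] by blast
  have "p ! y < p ! (j + 1)"
    using y is_perm_nth_inj[OF assms(3), of y "j + 1"] assms(4) by simp
  moreover have "y \<noteq> j \<Longrightarrow> p ! j < p ! y"
    using letter_at_A_imp[OF assms(1)] y by simp
  ultimately show ?thesis
    by (cases "y = j") auto
qed

lemma CAB_earlier_A_above:
  assumes perm: "is_perm p" and av: "avoids1324 p"
    and j: "0 < j" "j + 1 < length p"
    and A: "letter_at p j = A" and C: "letter_at p (j - 1) = C" and B: "letter_at p (j + 1) = B"
    and k: "k < j" "letter_at p k = A"
  shows "p ! (j + 1) < p ! k"
proof -
  have less_if_not_greater: "p ! x < p ! y"
    if "x < length p" "y < length p" "x \<noteq> y" "\<not> p ! y < p ! x" for x y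
    using that is_perm_nth_inj[OF perm, of x y] by simp
  have red: "is_red p j" "is_red p (j + 1)"
    using letter_at_A_imp[OF A] letter_at_B_imp[OF B] by simp_all
  obtain m where m: "j - 1 < m" "m < length p" "\<not> is_red p m" "p ! (j - 1) \<le> p ! m"
    and blue: "\<not> is_red p (j - 1)"
    using letter_at_C_imp[OF C] by blast
  from m red have "m \<noteq> j" "m \<noteq> j + 1" by auto
  with m have m_after: "j + 1 < m" by simp
  have m_above: "p ! (j - 1) < p ! m"
    using m less_if_not_greater[of "j - 1" m] by simp
  obtain a b where ab: "a < b" "b < j - 1" "is_red p a" "is_red p b"
    "p ! a < p ! (j - 1)" "p ! (j - 1) < p ! b"
  proof -
    have "j - 1 < length p" using j by simp
    then show ?thesis using blue is_red_iff[of "j - 1" p] that by blast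
  qed
  have below_b: "p ! (j + 1) < p ! b"
  proof (rule ccontr)
    assume "\<not> p ! (j + 1) < p ! b"
    then have "p ! b < p ! (j + 1)"
      using less_if_not_greater[of b "j + 1"] ab j by simp
    then show False
      using avoids1324_nth[OF av, of a b "j - 1" "j + 1"] ab j by simp
  qed
  have below_a: "p ! (j + 1) < p ! a"
  proof (rule ccontr)
    assume "\<not> p ! (j + 1) < p ! a"
    then have "p ! a < p ! (j + 1)"
      using less_if_not_greater[of a "j + 1"] ab j by simp
    then show False
      using is_red_iff[of "j + 1" p] red(2) ab below_b j by auto
  qed
  from k C have "k < j - 1" by (cases "k = j - 1") auto
  show ?thesis
  proof (rule ccontr)
    assume "\<not> p ! (j + 1) < p ! k"
    then have "p ! k < p ! (j + 1)"
      using less_if_not_greater[of k "j + 1"] k j by simp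
    moreover have "p ! (j + 1) < p ! (j - 1)"
      using below_a ab by simp
    ultimately show False
      using avoids1324_nth[OF av, of k "j - 1" "j + 1" m] \<open>k < j - 1\<close> m_after m m_above j
      by simp
  qed
qed

lemma length_wword: "length (wword p) = length p"
  by (simp add: wword_def)

lemma wword_nth: "k < length p \<Longrightarrow> wword p ! k = letter_at p k"
  by (simp add: wword_def)

lemma length_zword: "length (zword p) = length p"
  by (simp add: zword_def del: upt_Suc)

lemma zword_nth_value:
  assumes "is_perm p" "k < length p"
  shows "zword p ! (p ! k - 1) = letter_at p k"
proof -
  have bounds: "1 \<le> p ! k" "p ! k \<le> length p"
    using is_perm_nth_bounds[OF assms] by simp_all
  have "(THE j. j < length p \<and> p ! j = p ! k) = k"
    using assms is_perm_nth_inj[OF assms(1)] by (intro the_equality) auto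
  moreover have "[1..<length p + 1] ! (p ! k - 1) = p ! k"
    using bounds by (simp del: upt_Suc)
  ultimately show ?thesis
    unfolding zword_def using bounds by (simp del: upt_Suc)
qed

lemma A_positions_wword: "A_positions (wword p) = filter (\<lambda>k. letter_at p k = A) [0..<length p]"
  unfolding A_positions_def length_wword by (rule filter_cong) (auto simp: wword_nth)

lemma set_A_positions_wword: "set (A_positions (wword p)) = {k. k < length p \<and> letter_at p k = A}"
  by (auto simp: A_positions_wword)

text \<open>The A's of w(p) are the left-to-right minima of the red entries, so their values
  decrease; hence z(p) lists them in reverse order.\<close>

lemma A_positions_zword:
  assumes perm: "is_perm p"
  shows "A_positions (zword p) = map (\<lambda>k. p ! k - 1) (rev (A_positions (wword p)))"
proof -
  let ?P = "A_positions (wword p)"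
  let ?f = "\<lambda>k. p ! k - 1"
  have sorted_P: "sorted_wrt (<) ?P"
    by (simp add: A_positions_wword sorted_wrt_filter)
  have "sorted_wrt (<) (map ?f (rev ?P))"
    unfolding sorted_wrt_map sorted_wrt_rev
  proof (rule sorted_wrt_mono_rel[OF _ sorted_P])
    fix x y assume "x \<in> set ?P" "y \<in> set ?P" "x < y"
    then show "p ! y - 1 < p ! x - 1"
      using letter_at_A_imp[of p x] letter_at_A_imp[of p y] is_perm_nth_bounds[OF perm, of y]
      by (auto simp: set_A_positions_wword)
  qed
  moreover have "sorted_wrt (<) (A_positions (zword p))"
    by (simp add: A_positions_def sorted_wrt_filter)
  moreover have "set (A_positions (zword p)) = ?f ` set ?P"
  proof (intro equalityI subsetI)
    fix t assume "t \<in> set (A_positions (zword p))"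
    then have t: "t < length p" "zword p ! t = A"
      by (auto simp: A_positions_def length_zword)
    then have "t + 1 \<in> set p"
      using perm by (auto simp: is_perm_def)
    then obtain k where "k < length p" "p ! k = t + 1"
      by (auto simp: in_set_conv_nth)
    with t zword_nth_value[OF perm] show "t \<in> ?f ` set ?P"
      by (force simp: set_A_positions_wword)
  next
    fix t assume "t \<in> ?f ` set ?P"
    then obtain k where "k < length p" "letter_at p k = A" "t = p ! k - 1"
      by (auto simp: set_A_positions_wword)
    moreover from this have "t < length p"
      using is_perm_nth_bounds[OF perm] by fastforce
    ultimately show "t \<in> set (A_positions (zword p))"
      using zword_nth_value[OF perm] by (auto simp: A_positions_def length_zword)
  qed
  ultimately show ?thesis
    using strict_sorted_equal by (metis set_map set_rev)
qed

lemma zword_segment_contains_B: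
  assumes perm: "is_perm p"
    and i: "1 \<le> i" "i \<le> length (A_positions (wword p))"
    and j: "j = rev (A_positions (wword p)) ! (i - 1)"
    and c: "c < length p" "letter_at p c = B" "p ! j < p ! c"
    and above: "\<And>k. k < j \<Longrightarrow> letter_at p k = A \<Longrightarrow> p ! c < p ! k"
  shows "ith_segment_contains_B (zword p) i"
proof -
  let ?P = "A_positions (wword p)"
  let ?Z = "A_positions (zword p)"
  have Z: "?Z = map (\<lambda>k. p ! k - 1) (rev ?P)"
    using A_positions_zword[OF perm] .
  define t where "t = p ! c - 1"
  have c_bounds: "1 \<le> p ! c" "p ! c \<le> length p"
    using is_perm_nth_bounds[OF perm c(1)] by simp_all
  have "zword p ! t = B"
    using zword_nth_value[OF perm c(1)] c(2) by (simp add: t_def)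
  moreover have "?Z ! (i - 1) \<le> t"
    using Z i c(3) by (simp add: j t_def)
  moreover have "t < ?Z ! i" if "i < length ?Z"
  proof -
    have "rev ?P ! i < j"
      using that Z i sorted_wrt_nth_less[of "\<lambda>x y. y < x" "rev ?P" "i - 1" i]
      by (simp add: j sorted_wrt_rev A_positions_wword sorted_wrt_filter)
    moreover have "letter_at p (rev ?P ! i) = A"
      using that Z nth_mem[of i "rev ?P"] by (simp add: set_A_positions_wword)
    ultimately have "p ! c < p ! (rev ?P ! i)"
      by (rule above)
    then show ?thesis
      using that Z c_bounds by (simp add: t_def less_diff_iff)
  qed
  moreover have "t < length (zword p)"
    using c_bounds by (simp add: t_def length_zword)
  ultimately show ?thesis
    using i Z unfolding ith_segment_contains_B_def Let_def by auto
qed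

theorem lemma3p1:
  fixes p :: "nat list" and i :: nat
  assumes "is_perm p"
    and "avoids1324 p"
    and "i \<ge> 1"
    and "ith_A_from_right_in_CAB (wword p) i"
  shows "ith_segment_contains_B (zword p) i"
proof -
  let ?P = "A_positions (wword p)"
  define j where "j = rev ?P ! (i - 1)"
  have i: "1 \<le> i" "i \<le> length ?P" and j: "0 < j" "j + 1 < length p"
    and CAB: "letter_at p (j - 1) = C" "letter_at p j = A" "letter_at p (j + 1) = B"
    using assms(4) nth_mem[of "i - 1" "rev ?P"]
    unfolding ith_A_from_right_in_CAB_def j_def Let_def
    by (auto simp: length_wword wword_nth set_A_positions_wword)
  show ?thesis
  proof (rule zword_segment_contains_B[OF assms(1) i j_def j(2) CAB(3)])
    show "p ! j < p ! (j + 1)"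
      using A_B_value_less CAB j assms(1) by blast
    show "\<And>k. k < j \<Longrightarrow> letter_at p k = A \<Longrightarrow> p ! (j + 1) < p ! k"
      using CAB_earlier_A_above[OF assms(1,2) j CAB(2,1,3)] .
  qed
qed

end
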